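(* Let $n\in\mathbb{N}$, let $G=\mathbb{Z}_3^n$ be the elementary abelian $3$-group of rank $n$ (written multiplicatively), let $S$ be a sum-free set in $G$, and let $x\in S$. Then: (i) any two of the sets $S$, $x^{-1}S$, $xS$ are disjoint; (ii) any two of the sets $S$, $SS^{-1}$, $S^{-1}$ are disjoint. Moreover, if $S$ is a maximal sum-free set in $G$, then: (iii) $S\cup x^{-1}S\cup xS=G$ and $|S|=\frac{|G|}{3}$; (iv) $S\cup SS^{-1}\cup S^{-1}=G$.
   Context: A non-empty subset $S$ of a group $G$ is called sum-free if for all $s_1,s_2\in S$ (including the case $s_1=s_2$) one has $s_1s_2\notin S$. A maximal sum-free set in a finite group $G$ means a sum-free set of largest possible cardinality among all sum-free sets in $G$. Notation: $xS=\{xs: s\in S\}$, $x^{-1}S=\{x^{-1}s : s\in S\}$, $S^{-1}=\{s^{-1}: s\in S\}$, $SS^{-1}=\{st^{-1}: s,t\in S\}$. *)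

theory Defs
  imports "HOL-Algebra.Algebra"
begin

text \<open>The elementary abelian 3-group Z_3^n, written multiplicatively:
  elements are vectors (coordinates 0..n-1 in {0,1,2}, zero outside),
  multiplication is coordinatewise addition modulo 3.\<close>
definition Z3n_carrier :: "nat \<Rightarrow> (nat \<Rightarrow> int) set" where
  "Z3n_carrier n = {f. (\<forall>i<n. f i \<in> {0, 1, 2}) \<and> (\<forall>i. n \<le> i \<longrightarrow> f i = 0)}"

definition Z3n_mult :: "nat \<Rightarrow> (nat \<Rightarrow> int) \<Rightarrow> (nat \<Rightarrow> int) \<Rightarrow> (nat \<Rightarrow> int)" where
  "Z3n_mult n f g = (\<lambda>i. if i < n then (f i + g i) mod 3 else 0)"

definition Z3n :: "nat \<Rightarrow> (nat \<Rightarrow> int) monoid" where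
  "Z3n n = \<lparr>carrier = Z3n_carrier n, monoid.mult = Z3n_mult n, monoid.one = (\<lambda>i. 0)\<rparr>"

definition sum_free :: "('a, 'b) monoid_scheme \<Rightarrow> 'a set \<Rightarrow> bool" where
  "sum_free G S \<longleftrightarrow> S \<noteq> {} \<and> S \<subseteq> carrier G \<and>
     (\<forall>s1\<in>S. \<forall>s2\<in>S. s1 \<otimes>\<^bsub>G\<^esub> s2 \<notin> S)"

definition max_sum_free :: "('a, 'b) monoid_scheme \<Rightarrow> 'a set \<Rightarrow> bool" where
  "max_sum_free G S \<longleftrightarrow> sum_free G S \<and> (\<forall>T. sum_free G T \<longrightarrow> card T \<le> card S)"

end

theory Submission
  imports Defs
begin

text \<open>In a group of exponent 3 every element satisfies \<open>x\<^sup>2 = x\<inverse>\<close>, so each disjointness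
  claim reduces to an equation \<open>a b = c\<close> with \<open>a, b, c \<in> S\<close>. Hence \<open>S\<close>, \<open>x\<inverse>S\<close>, \<open>xS\<close> are
  disjoint translates of \<open>S\<close>, giving \<open>3|S| \<le> |G|\<close>; the same holds for \<open>S\<close>, \<open>Sx\<inverse> \<subseteq> SS\<inverse>\<close>
  and \<open>S\<inverse>\<close>. In \<open>\<int>\<^sub>3\<^sup>n\<close> with \<open>n > 0\<close> the elements with first coordinate 1 form a sum-free
  set of size \<open>|G|/3\<close>, so a maximal sum-free set attains the bound and the three disjoint
  sets of size \<open>|S|\<close> fill \<open>G\<close>.\<close>

lemma sum_free_carrier: "sum_free G S \<Longrightarrow> S \<subseteq> carrier G"
  by (simp add: sum_free_def)

lemma sum_free_mult_notin: "sum_free G S \<Longrightarrow> a \<in> S \<Longrightarrow> b \<in> S \<Longrightarrow> a \<otimes>\<^bsub>G\<^esub> b \<notin> S"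
  by (simp add: sum_free_def)

lemma (in monoid) sum_free_carrier_ne_one: "sum_free G S \<Longrightarrow> carrier G \<noteq> {\<one>}"
  using sum_free_mult_notin[of G S \<one> \<one>] unfolding sum_free_def by force

lemma (in group) card_l_coset:
  assumes "x \<in> carrier G" "S \<subseteq> carrier G"
  shows "card (x <# S) = card S"
proof -
  have "x <# S = (\<lambda>s. x \<otimes> s) ` S" unfolding l_coset_def by auto
  with assms show ?thesis by (metis card_image inj_on_cmult inj_on_subset)
qed

lemma (in group) card_r_coset:
  assumes "x \<in> carrier G" "S \<subseteq> carrier G"
  shows "card (S #> x) = card S"
proof -
  have "S #> x = (\<lambda>s. s \<otimes> x) ` S" unfolding r_coset_def by auto
  with assms show ?thesis by (metis card_image inj_on_multc inj_on_subset)
qed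

lemma (in group) card_set_inv:
  assumes "S \<subseteq> carrier G"
  shows "card (set_inv S) = card S"
proof -
  have "set_inv S = (\<lambda>s. inv s) ` S" unfolding SET_INV_def by auto
  with assms show ?thesis by (metis card_image inv_inj inj_on_subset)
qed

lemma (in group) sum_free_disjoint_inv_l_coset:
  assumes "sum_free G S" "x \<in> S"
  shows "S \<inter> (inv x <# S) = {}"
proof -
  { fix s assume s: "s \<in> S" "inv x \<otimes> s \<in> S"
    have "x \<in> carrier G" "s \<in> carrier G" using assms s sum_free_carrier by blast+
    then have "x \<otimes> (inv x \<otimes> s) = s" by (simp add: m_assoc[symmetric])
    with sum_free_mult_notin[OF assms s(2)] s have False by simp }
  then show ?thesis unfolding l_coset_def by auto
qed

lemma (in group) sum_free_disjoint_l_coset: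
  "sum_free G S \<Longrightarrow> x \<in> S \<Longrightarrow> S \<inter> (x <# S) = {}"
  unfolding l_coset_def using sum_free_mult_notin by fastforce

lemma (in group) sum_free_disjoint_quotients:
  assumes "sum_free G S"
  shows "S \<inter> (S <#> set_inv S) = {}"
proof -
  { fix a b assume ab: "a \<in> S" "b \<in> S" "a \<otimes> inv b \<in> S"
    have "a \<in> carrier G" "b \<in> carrier G" using assms ab sum_free_carrier by blast+
    then have "a \<otimes> inv b \<otimes> b = a" by (simp add: m_assoc)
    with sum_free_mult_notin[OF assms ab(3,2)] ab have False by simp }
  then show ?thesis unfolding set_mult_def SET_INV_def by auto
qed

lemma (in comm_group) sum_free_disjoint_quotients_set_inv:
  assumes "sum_free G S"
  shows "(S <#> set_inv S) \<inter> set_inv S = {}"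
proof -
  { fix a b c assume abc: "a \<in> S" "b \<in> S" "c \<in> S" "a \<otimes> inv b = inv c"
    have c: "a \<in> carrier G" "b \<in> carrier G" "c \<in> carrier G"
      using assms abc sum_free_carrier by blast+
    then have "a \<otimes> c = a \<otimes> inv b \<otimes> b \<otimes> c" by (simp add: m_assoc)
    also have "\<dots> = b" using abc(4) c by (simp add: m_ac)
    finally have False using sum_free_mult_notin[OF assms abc(1,3)] abc(2) by simp }
  then show ?thesis unfolding set_mult_def SET_INV_def by blast
qed

locale exponent3_group = group +
  assumes cube_eq_one: "x \<in> carrier G \<Longrightarrow> x \<otimes> x \<otimes> x = \<one>"
begin

lemma square_eq_inv: "x \<in> carrier G \<Longrightarrow> x \<otimes> x = inv x"
  by (metis cube_eq_one inv_equality m_closed)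

lemma sum_free_disjoint_inv_l_coset_l_coset:
  assumes "sum_free G S" "x \<in> S"
  shows "(inv x <# S) \<inter> (x <# S) = {}"
proof -
  { fix s t assume st: "s \<in> S" "t \<in> S" "inv x \<otimes> s = x \<otimes> t"
    have c: "x \<in> carrier G" "s \<in> carrier G" "t \<in> carrier G"
      using assms st sum_free_carrier by blast+
    then have "s = x \<otimes> (inv x \<otimes> s)" by (simp add: m_assoc[symmetric])
    also have "\<dots> = inv x \<otimes> t" using st(3) c by (simp add: m_assoc[symmetric] square_eq_inv)
    finally have "x \<otimes> s = t" using c by (simp add: m_assoc[symmetric])
    with sum_free_mult_notin[OF assms(1,2) st(1)] st(2) have False by simp }
  then show ?thesis unfolding l_coset_def by auto
qed

lemma sum_free_disjoint_set_inv:
  assumes "sum_free G S"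
  shows "S \<inter> set_inv S = {}"
proof -
  { fix t assume t: "t \<in> S" "inv t \<in> S"
    with assms have "t \<otimes> t = inv t" using sum_free_carrier square_eq_inv by blast
    with sum_free_mult_notin[OF assms t(1) t(1)] t(2) have False by simp }
  then show ?thesis unfolding SET_INV_def by auto
qed

end

locale exponent3_comm_group = exponent3_group + comm_group
begin

context
  fixes S x
  assumes finite_carrier: "finite (carrier G)"
    and sum_free: "sum_free G S" and x_in_S: "x \<in> S"
begin

lemma x_carrier: "x \<in> carrier G"
  using x_in_S sum_free_carrier[OF sum_free] by blast

lemma translates_subset_carrier:
  "S \<union> (inv x <# S) \<union> (x <# S) \<subseteq> carrier G"
  using sum_free_carrier[OF sum_free] x_carrier by (simp add: l_coset_subset_G)

lemma quotients_subset_carrier: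
  "S \<union> (S #> inv x) \<union> set_inv S \<subseteq> carrier G"
  using sum_free_carrier[OF sum_free] x_carrier
  by (auto simp: r_coset_subset_G SET_INV_def)

lemma card_translates_sum_free:
  "card (S \<union> (inv x <# S) \<union> (x <# S)) = 3 * card S"
proof -
  have fin: "finite S" "finite (inv x <# S)" "finite (x <# S)"
    using translates_subset_carrier finite_carrier by (auto intro: finite_subset)
  have "card (S \<union> (inv x <# S) \<union> (x <# S)) = card S + card (inv x <# S) + card (x <# S)"
    using fin sum_free_disjoint_inv_l_coset[OF sum_free x_in_S]
      sum_free_disjoint_l_coset[OF sum_free x_in_S]
      sum_free_disjoint_inv_l_coset_l_coset[OF sum_free x_in_S]
    by (simp add: card_Un_disjoint Int_Un_distrib2)
  also have "\<dots> = 3 * card S"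
    using x_carrier sum_free_carrier[OF sum_free] by (simp add: card_l_coset)
  finally show ?thesis .
qed

lemma three_card_sum_free_le: "3 * card S \<le> card (carrier G)"
  using card_mono[OF finite_carrier translates_subset_carrier] card_translates_sum_free
  by simp

lemma card_quotients_sum_free:
  "card (S \<union> (S #> inv x) \<union> set_inv S) = 3 * card S"
proof -
  have fin: "finite S" "finite (S #> inv x)" "finite (set_inv S)"
    using quotients_subset_carrier finite_carrier by (auto intro: finite_subset)
  have "S #> inv x \<subseteq> S <#> set_inv S"
    using x_in_S unfolding r_coset_def set_mult_def SET_INV_def by auto
  then have "S \<inter> (S #> inv x) = {}" "(S #> inv x) \<inter> set_inv S = {}"
    using sum_free_disjoint_quotients[OF sum_free]
      sum_free_disjoint_quotients_set_inv[OF sum_free] by blast+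
  with fin sum_free_disjoint_set_inv[OF sum_free]
  have "card (S \<union> (S #> inv x) \<union> set_inv S) = card S + card (S #> inv x) + card (set_inv S)"
    by (simp add: card_Un_disjoint Int_Un_distrib2)
  also have "\<dots> = 3 * card S"
    using x_carrier sum_free_carrier[OF sum_free] by (simp add: card_r_coset card_set_inv)
  finally show ?thesis .
qed

context
  assumes card_carrier_le: "card (carrier G) \<le> 3 * card S"
begin

lemma translates_sum_free_eq_carrier:
  "S \<union> (inv x <# S) \<union> (x <# S) = carrier G"
  using card_carrier_le card_translates_sum_free
  by (intro card_seteq[OF finite_carrier translates_subset_carrier]) simp

lemma quotients_sum_free_eq_carrier:
  "S \<union> (S <#> set_inv S) \<union> set_inv S = carrier G"
proof -
  have "S \<union> (S #> inv x) \<union> set_inv S = carrier G"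
    using card_carrier_le card_quotients_sum_free
    by (intro card_seteq[OF finite_carrier quotients_subset_carrier]) simp
  moreover have "S #> inv x \<subseteq> S <#> set_inv S" "S <#> set_inv S \<subseteq> carrier G"
    using x_in_S sum_free_carrier[OF sum_free]
    unfolding r_coset_def set_mult_def SET_INV_def by auto
  ultimately show ?thesis by blast
qed

end

end

end

lemma carrier_Z3n:
  "f \<in> carrier (Z3n n) \<longleftrightarrow> (\<forall>i<n. f i \<in> {0, 1, 2}) \<and> (\<forall>i. n \<le> i \<longrightarrow> f i = 0)"
  by (simp add: Z3n_def Z3n_carrier_def)

lemma mult_Z3n: "f \<otimes>\<^bsub>Z3n n\<^esub> g = (\<lambda>i. if i < n then (f i + g i) mod 3 else 0)"
  by (simp add: Z3n_def Z3n_mult_def)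

lemma one_Z3n: "\<one>\<^bsub>Z3n n\<^esub> = (\<lambda>i. 0)"
  by (simp add: Z3n_def)

lemma finite_carrier_Z3n: "finite (carrier (Z3n n))"
proof -
  have "carrier (Z3n n) \<subseteq> (\<lambda>g i. if i < n then g i else 0) ` (\<Pi>\<^sub>E i\<in>{..<n}. {0::int, 1, 2})"
  proof
    fix f assume f: "f \<in> carrier (Z3n n)"
    show "f \<in> (\<lambda>g i. if i < n then g i else 0) ` (\<Pi>\<^sub>E i\<in>{..<n}. {0::int, 1, 2})"
      by (rule image_eqI[where x = "restrict f {..<n}"]) (use f in \<open>auto simp: carrier_Z3n\<close>)
  qed
  then show ?thesis by (rule finite_subset) (auto intro: finite_PiE)
qed

lemma carrier_Z3n_0: "carrier (Z3n 0) = {\<one>\<^bsub>Z3n 0\<^esub>}"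
  by (auto simp: carrier_Z3n one_Z3n)

lemma comm_group_Z3n: "comm_group (Z3n n)"
proof (rule comm_groupI)
  fix x y z
  assume x: "x \<in> carrier (Z3n n)" and "y \<in> carrier (Z3n n)" and "z \<in> carrier (Z3n n)"
  show "x \<otimes>\<^bsub>Z3n n\<^esub> y \<in> carrier (Z3n n)" by (auto simp: carrier_Z3n mult_Z3n)
  show "x \<otimes>\<^bsub>Z3n n\<^esub> y \<otimes>\<^bsub>Z3n n\<^esub> z = x \<otimes>\<^bsub>Z3n n\<^esub> (y \<otimes>\<^bsub>Z3n n\<^esub> z)"
    by (auto simp: mult_Z3n mod_add_left_eq mod_add_right_eq add.assoc)
  show "x \<otimes>\<^bsub>Z3n n\<^esub> y = y \<otimes>\<^bsub>Z3n n\<^esub> x" by (auto simp: mult_Z3n add.commute)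
  show "\<one>\<^bsub>Z3n n\<^esub> \<otimes>\<^bsub>Z3n n\<^esub> x = x"
    using x by (auto simp: carrier_Z3n mult_Z3n one_Z3n fun_eq_iff)
  have "(\<lambda>i. if i < n then 2 * x i mod 3 else 0) \<otimes>\<^bsub>Z3n n\<^esub> x = \<one>\<^bsub>Z3n n\<^esub>"
    using x by (auto simp: carrier_Z3n mult_Z3n one_Z3n fun_eq_iff)
  then show "\<exists>y\<in>carrier (Z3n n). y \<otimes>\<^bsub>Z3n n\<^esub> x = \<one>\<^bsub>Z3n n\<^esub>"
    by (intro bexI) (auto simp: carrier_Z3n)
qed (auto simp: carrier_Z3n one_Z3n)

lemma exponent3_comm_group_Z3n: "exponent3_comm_group (Z3n n)"
proof -
  interpret comm_group "Z3n n" by (rule comm_group_Z3n)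
  show ?thesis
    by unfold_locales (auto simp: carrier_Z3n mult_Z3n one_Z3n fun_eq_iff)
qed

lemma sum_free_first_coordinate_one:
  assumes "0 < n"
  shows "sum_free (Z3n n) {f \<in> carrier (Z3n n). f 0 = 1}"
proof -
  have "(\<lambda>i. if i = 0 then 1 else 0) \<in> {f \<in> carrier (Z3n n). f 0 = 1}"
    using assms by (simp add: carrier_Z3n)
  with assms show ?thesis unfolding sum_free_def by (auto simp: mult_Z3n)
qed

lemma card_carrier_Z3n_le:
  assumes "0 < n"
  shows "card (carrier (Z3n n)) \<le> 3 * card {f \<in> carrier (Z3n n). f 0 = 1}"
proof -
  interpret exponent3_comm_group "Z3n n" by (rule exponent3_comm_group_Z3n)
  define T where "T = {f \<in> carrier (Z3n n). f 0 = 1}"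
  define e :: "nat \<Rightarrow> int" where "e = (\<lambda>i. if i = 0 then 1 else 0)"
  have e: "e \<in> carrier (Z3n n)" using assms by (simp add: e_def carrier_Z3n)
  have shift: "a \<otimes>\<^bsub>Z3n n\<^esub> f \<in> T"
    if "a \<in> carrier (Z3n n)" "f \<in> carrier (Z3n n)" "(a 0 + f 0) mod 3 = 1" for a f
    using that assms m_closed[OF that(1,2)] by (simp add: T_def mult_Z3n)
  have cover: "carrier (Z3n n) \<subseteq> T \<union> (inv\<^bsub>Z3n n\<^esub> e <#\<^bsub>Z3n n\<^esub> T) \<union> (e <#\<^bsub>Z3n n\<^esub> T)"
  proof
    fix f assume f: "f \<in> carrier (Z3n n)"
    have "e 0 = 1" "(inv\<^bsub>Z3n n\<^esub> e) 0 = 2"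
      using e assms by (auto simp: square_eq_inv[symmetric] mult_Z3n e_def)
    have "f 0 \<in> {0, 1, 2}" using f assms by (simp add: carrier_Z3n)
    moreover have "f = inv\<^bsub>Z3n n\<^esub> e \<otimes>\<^bsub>Z3n n\<^esub> (e \<otimes>\<^bsub>Z3n n\<^esub> f)"
      "f = e \<otimes>\<^bsub>Z3n n\<^esub> (inv\<^bsub>Z3n n\<^esub> e \<otimes>\<^bsub>Z3n n\<^esub> f)"
      using e f by (simp_all add: m_assoc[symmetric])
    moreover have "f 0 = 0 \<Longrightarrow> e \<otimes>\<^bsub>Z3n n\<^esub> f \<in> T" "f 0 = 2 \<Longrightarrow> inv\<^bsub>Z3n n\<^esub> e \<otimes>\<^bsub>Z3n n\<^esub> f \<in> T"
      using e f \<open>e 0 = 1\<close> \<open>(inv\<^bsub>Z3n n\<^esub> e) 0 = 2\<close> by (auto intro!: shift)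
    ultimately show "f \<in> T \<union> (inv\<^bsub>Z3n n\<^esub> e <#\<^bsub>Z3n n\<^esub> T) \<union> (e <#\<^bsub>Z3n n\<^esub> T)"
      using f unfolding T_def l_coset_def by auto
  qed
  have T: "T \<subseteq> carrier (Z3n n)" "finite T"
    using finite_carrier_Z3n by (auto simp: T_def)
  have "card (carrier (Z3n n)) \<le> card (T \<union> (inv\<^bsub>Z3n n\<^esub> e <#\<^bsub>Z3n n\<^esub> T) \<union> (e <#\<^bsub>Z3n n\<^esub> T))"
    using cover T e by (intro card_mono) (auto simp: l_coset_def)
  also have "\<dots> \<le> card T + card (inv\<^bsub>Z3n n\<^esub> e <#\<^bsub>Z3n n\<^esub> T) + card (e <#\<^bsub>Z3n n\<^esub> T)"
    by (meson card_Un_le add_right_mono le_trans)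
  also have "\<dots> = 3 * card T" using T e by (simp add: card_l_coset)
  finally show ?thesis by (simp add: T_def)
qed

lemma card_carrier_Z3n_le_max_sum_free:
  assumes "max_sum_free (Z3n n) S"
  shows "card (carrier (Z3n n)) \<le> 3 * card S"
proof -
  interpret comm_group "Z3n n" by (rule comm_group_Z3n)
  have "n \<noteq> 0"
    using assms carrier_Z3n_0 sum_free_carrier_ne_one unfolding max_sum_free_def by metis
  then have "card (carrier (Z3n n)) \<le> 3 * card {f \<in> carrier (Z3n n). f 0 = 1}"
    by (simp add: card_carrier_Z3n_le)
  also have "\<dots> \<le> 3 * card S"
    using assms sum_free_first_coordinate_one \<open>n \<noteq> 0\<close> unfolding max_sum_free_def by simp
  finally show ?thesis .
qed

theorem lemma1:
  fixes n :: nat and S :: "(nat \<Rightarrow> int) set" and x :: "nat \<Rightarrow> int"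
  defines "G \<equiv> Z3n n"
  assumes "sum_free G S" and "x \<in> S"
  shows "(S \<inter> (inv\<^bsub>G\<^esub> x <#\<^bsub>G\<^esub> S) = {}
         \<and> S \<inter> (x <#\<^bsub>G\<^esub> S) = {}
         \<and> (inv\<^bsub>G\<^esub> x <#\<^bsub>G\<^esub> S) \<inter> (x <#\<^bsub>G\<^esub> S) = {})
       \<and> (S \<inter> (S <#>\<^bsub>G\<^esub> set_inv\<^bsub>G\<^esub> S) = {}
         \<and> S \<inter> set_inv\<^bsub>G\<^esub> S = {}
         \<and> (S <#>\<^bsub>G\<^esub> set_inv\<^bsub>G\<^esub> S) \<inter> set_inv\<^bsub>G\<^esub> S = {})
       \<and> (max_sum_free G S \<longrightarrow>
           S \<union> (inv\<^bsub>G\<^esub> x <#\<^bsub>G\<^esub> S) \<union> (x <#\<^bsub>G\<^esub> S) = carrier G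
           \<and> real (card S) = real (card (carrier G)) / 3)
       \<and> (max_sum_free G S \<longrightarrow>
           S \<union> (S <#>\<^bsub>G\<^esub> set_inv\<^bsub>G\<^esub> S) \<union> set_inv\<^bsub>G\<^esub> S = carrier G)"
proof -
  interpret exponent3_comm_group G unfolding G_def by (rule exponent3_comm_group_Z3n)
  have fin: "finite (carrier G)" unfolding G_def by (rule finite_carrier_Z3n)
  have maximal: "card (carrier G) \<le> 3 * card S" if "max_sum_free G S"
    using that unfolding G_def by (rule card_carrier_Z3n_le_max_sum_free)
  have "3 * card S = card (carrier G)" if "max_sum_free G S"
    using maximal[OF that] three_card_sum_free_le[OF fin assms(2,3)] by linarith
  then have card_S: "real (card S) = real (card (carrier G)) / 3" if "max_sum_free G S"
    using that by (metis nonzero_mult_div_cancel_left of_nat_mult of_nat_numeral zero_neq_numeral)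
  show ?thesis
    using sum_free_disjoint_inv_l_coset[OF assms(2,3)] sum_free_disjoint_l_coset[OF assms(2,3)]
      sum_free_disjoint_inv_l_coset_l_coset[OF assms(2,3)]
      sum_free_disjoint_quotients[OF assms(2)] sum_free_disjoint_set_inv[OF assms(2)]
      sum_free_disjoint_quotients_set_inv[OF assms(2)] card_S
      translates_sum_free_eq_carrier[OF fin assms(2,3) maximal]
      quotients_sum_free_eq_carrier[OF fin assms(2,3) maximal]
    by blast
qed

end
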